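(* Let $r$, $s$, $c$, $d$ and $a_n$ be any integers with $r\neq0$ and $r+d\neq0$, let $n$ be a positive integer, and assume $U_d$, $U_r$, $U_{r+d}$ are nonzero. Then \[ \begin{split} &\sum_{a_{n-1}=c}^{a_n}\sum_{a_{n-2}=c}^{a_{n-1}}\cdots\sum_{a_0=c}^{a_1}\left(\frac{U_d}{U_{r+d}}\right)^{a_0}W_{ra_0+s} =\frac{(-1)^nU_d^{n+a_n}}{q^{dn}U_r^nU_{r+d}^{a_n}}W_{(r+d)n+ra_n+s}\\ &\qquad-\left(\frac{U_d}{U_{r+d}}\right)^{c-1}\sum_{j=0}^{n-1}\frac{(-1)^{n-j}}{q^{d(n-j)}}\left(\frac{U_d}{U_r}\right)^{n-j}W_{r(n-j+c-1)+d(n-j)+s}\binom{a_n+j-c}{j}. \end{split} \]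
   Context: Let $a,b,p,q$ be complex numbers with $p\neq0$, $q\neq0$. The Horadam sequence $W_j=W_j(a,b;p,q)$ is defined by $W_0=a$, $W_1=b$, $W_j=pW_{j-1}-qW_{j-2}$ for $j\ge2$, and extended to negative indices by $W_{-m}=(pW_{-m+1}-W_{-m+2})/q$, so the recurrence holds for all integers. $U_j=W_j(0,1;p,q)$ is the Lucas sequence of the first kind. For integers $c,m$ and a function $f$ on the integers, $\sum_{k=c}^m f(k)$ denotes the usual sum if $m\ge c$, equals $0$ if $m=c-1$, and equals $-\sum_{k=m+1}^{c-1}f(k)$ if $m\le c-2$. The nested sum $\sum_{a_{n-1}=c}^{a_n}\cdots\sum_{a_0=c}^{a_1}g(a_0)$ is the iterated sum with $n$ summation signs: innermost over $a_0$ from $c$ to $a_1$, then $a_1$ from $c$ to $a_2$, ..., outermost $a_{n-1}$ from $c$ to $a_n$. For an integer $j\ge0$ and any number $y$, $\binom{y}{j}=y(y-1)\cdots(y-j+1)/j!$. *)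

theory Defs
  imports Complex_Main
begin

fun Wpos :: "complex \<Rightarrow> complex \<Rightarrow> complex \<Rightarrow> complex \<Rightarrow> nat \<Rightarrow> complex" where
  "Wpos a b p q 0 = a"
| "Wpos a b p q (Suc 0) = b"
| "Wpos a b p q (Suc (Suc n)) = p * Wpos a b p q (Suc n) - q * Wpos a b p q n"

text \<open>Horadam sequence on nonpositive indices: Wneg k = W_{-k},
  W_{-m} = (p W_{-m+1} - W_{-m+2}) / q.\<close>
fun Wneg :: "complex \<Rightarrow> complex \<Rightarrow> complex \<Rightarrow> complex \<Rightarrow> nat \<Rightarrow> complex" where
  "Wneg a b p q 0 = a"
| "Wneg a b p q (Suc 0) = (p * a - b) / q"
| "Wneg a b p q (Suc (Suc m)) = (p * Wneg a b p q (Suc m) - Wneg a b p q m) / q"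

definition W :: "complex \<Rightarrow> complex \<Rightarrow> complex \<Rightarrow> complex \<Rightarrow> int \<Rightarrow> complex" where
  "W a b p q j = (if j \<ge> 0 then Wpos a b p q (nat j) else Wneg a b p q (nat (- j)))"

definition U :: "complex \<Rightarrow> complex \<Rightarrow> int \<Rightarrow> complex" where
  "U p q j = W 0 1 p q j"

definition gsum :: "int \<Rightarrow> int \<Rightarrow> (int \<Rightarrow> complex) \<Rightarrow> complex" where
  "gsum c m f = (if m \<ge> c then (\<Sum>k\<in>{c..m}. f k)
                 else if m = c - 1 then 0
                 else - (\<Sum>k\<in>{m+1..c-1}. f k))"

text \<open>nested n c g m = sum_{a_{n-1}=c}^{m} ... sum_{a_0=c}^{a_1} g a_0 (n summation signs).\<close>
fun nested :: "nat \<Rightarrow> int \<Rightarrow> (int \<Rightarrow> complex) \<Rightarrow> int \<Rightarrow> complex" where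
  "nested 0 c g m = g m"
| "nested (Suc n) c g m = gsum c m (nested n c g)"

end

theory Submission
  imports Defs
begin

(*
  Write x = U_d / U_(r+d) and A k m = (-U_d / (q^d U_r))^k x^m W_((r+d)k + rm + s), so that the
  summand is A 0 m. Then A (k+1) m - A (k+1) (m-1) = A k m: this is Vajda's identity
  U_(r+d) W_(t+d) - U_d W_(t+r+d) = q^d U_r W_t, which holds for every solution of the recurrence
  since, as functions of r, both sides solve it and agree at r = 0 and r = 1 (the latter being the
  Casoratian identity). So every summation turns A k into A (k+1) minus its value at the lower
  limit c - 1. These boundary values are carried along with binomial weights, which obey Pascal's
  rule and vanish at the lower limit, so the whole expression telescopes through all n summations.
*)

definition horadam_recurrence :: "complex \<Rightarrow> complex \<Rightarrow> (int \<Rightarrow> complex) \<Rightarrow> bool" where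
  "horadam_recurrence p q f \<longleftrightarrow> (\<forall>j. f (j + 2) = p * f (j + 1) - q * f j)"

lemma horadam_recurrenceD: "horadam_recurrence p q f \<Longrightarrow> f (j + 2) = p * f (j + 1) - q * f j"
  unfolding horadam_recurrence_def by blast

lemma horadam_recurrence_shift:
  assumes "horadam_recurrence p q f"
  shows "horadam_recurrence p q (\<lambda>j. f (j + k))"
  unfolding horadam_recurrence_def
proof
  fix j
  show "f (j + 2 + k) = p * f (j + 1 + k) - q * f (j + k)"
    using horadam_recurrenceD[OF assms, of "j + k"] by (simp add: ac_simps)
qed

lemma horadam_recurrence_diff:
  assumes "horadam_recurrence p q f" "horadam_recurrence p q g"
  shows "horadam_recurrence p q (\<lambda>j. f j - g j)"
  unfolding horadam_recurrence_def horadam_recurrenceD[OF assms(1)] horadam_recurrenceD[OF assms(2)]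
  by (simp add: algebra_simps)

lemma horadam_recurrence_scale:
  assumes "horadam_recurrence p q f"
  shows "horadam_recurrence p q (\<lambda>j. c * f j)"
  unfolding horadam_recurrence_def horadam_recurrenceD[OF assms] by (simp add: algebra_simps)

lemma horadam_recurrence_eq_0:
  assumes "horadam_recurrence p q f" "q \<noteq> 0" "f 0 = 0" "f 1 = 0"
  shows "f j = 0"
proof -
  have "f j = 0 \<and> f (j + 1) = 0"
  proof (induction j rule: int_induct[where k = 0])
    case base then show ?case using assms(3,4) by simp
  next
    case (step1 i)
    then show ?case using horadam_recurrenceD[OF assms(1), of i] by (simp add: add.assoc)
  next
    case (step2 i)
    have "f (i + 1) = p * f i - q * f (i - 1)"
      using horadam_recurrenceD[OF assms(1), of "i - 1"] by (simp add: add.commute)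
    then show ?case using step2 assms(2) by simp
  qed
  then show ?thesis ..
qed

lemma W_nat: "W a b p q (int n) = Wpos a b p q n"
  by (simp add: W_def)

lemma W_neg: "W a b p q (- int n) = Wneg a b p q n"
  by (simp add: W_def)

lemma horadam_recurrence_W:
  assumes "q \<noteq> 0"
  shows "horadam_recurrence p q (W a b p q)"
  unfolding horadam_recurrence_def
proof
  fix j :: int
  consider n where "j = int n" | "j = -1" | m where "j = - int (Suc (Suc m))"
  proof -
    consider "j \<ge> 0" | "j = -1" | "j \<le> -2" by linarith
    then show ?thesis
    proof cases
      case 3
      then have "j = - int (Suc (Suc (nat (- j - 2))))" by simp
      then show ?thesis using that(3) by blast
    qed (use that nonneg_eq_int in blast)+
  qed
  then show "W a b p q (j + 2) = p * W a b p q (j + 1) - q * W a b p q j"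
  proof cases
    case 1
    have shifts: "j + 2 = int (Suc (Suc n))" "j + 1 = int (Suc n)" using 1 by simp_all
    show ?thesis unfolding shifts unfolding 1 W_nat by simp
  next
    case 2
    then show ?thesis using assms by (simp add: W_def)
  next
    case 3
    have shifts: "j + 2 = - int m" "j + 1 = - int (Suc m)" using 3 by simp_all
    show ?thesis unfolding shifts unfolding 3 W_neg using assms by simp
  qed
qed

lemma horadam_recurrence_U: "q \<noteq> 0 \<Longrightarrow> horadam_recurrence p q (U p q)"
  unfolding U_def[abs_def] by (rule horadam_recurrence_W)

lemma U_0 [simp]: "U p q 0 = 0" and U_1 [simp]: "U p q 1 = 1"
  by (simp_all add: U_def W_def)

lemma horadam_recurrence_casoratian:
  assumes "horadam_recurrence p q u" "horadam_recurrence p q v" "q \<noteq> 0"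
  shows "u (k + 1) * v k - u k * v (k + 1) = q powi k * (u 1 * v 0 - u 0 * v 1)"
proof -
  define C where "C k = u (k + 1) * v k - u k * v (k + 1)" for k
  have step: "C (k + 1) = q * C k" for k
    unfolding C_def add.assoc one_add_one
      horadam_recurrenceD[OF assms(1)] horadam_recurrenceD[OF assms(2)]
    by (simp add: algebra_simps)
  have "C k = q powi k * C 0"
  proof (induction k rule: int_induct[where k = 0])
    case (step1 i)
    then show ?case using step[of i] assms(3) by (simp add: power_int_add_1')
  next
    case (step2 i)
    then show ?case using step[of "i - 1"] assms(3) by (simp add: power_int_diff field_simps)
  qed simp
  then show ?thesis unfolding C_def by simp
qed

lemma horadam_dOcagne:
  assumes "horadam_recurrence p q f" "q \<noteq> 0"
  shows "U p q (k + 1) * f (t + k) - U p q k * f (t + k + 1) = q powi k * f t"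
  using horadam_recurrence_casoratian[OF horadam_recurrence_U[OF assms(2)]
      horadam_recurrence_shift[OF assms(1), of t] assms(2), of k]
  by (simp add: ac_simps)

lemma horadam_vajda:
  assumes "horadam_recurrence p q f" "q \<noteq> 0"
  shows "U p q (r + d) * f (t + d) - U p q d * f (t + r + d) = q powi d * U p q r * f t"
proof -
  define h where "h r = f (t + d) * U p q (r + d) - U p q d * f (r + (t + d)) - q powi d * f t * U p q r"
    for r
  have "horadam_recurrence p q h"
    unfolding h_def
    by (intro horadam_recurrence_diff horadam_recurrence_scale horadam_recurrence_shift
        horadam_recurrence_U assms)
  moreover have "h 0 = 0" "h 1 = 0"
    using horadam_dOcagne[OF assms, of d t] by (simp_all add: h_def algebra_simps)
  ultimately have "h r = 0"
    using horadam_recurrence_eq_0 assms(2) by blast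
  then show ?thesis unfolding h_def by (simp add: algebra_simps)
qed

lemma gsum_diff: "gsum c m h - gsum c (m - 1) h = h m"
proof -
  have split_top: "{a..b} = insert b {a..b - 1}" and split_bottom: "{a..b} = insert a {a + 1..b}"
    if "a \<le> b" for a b :: int
    using that by auto
  consider "c + 1 \<le> m" | "m = c" | "m = c - 1" | "m \<le> c - 2" by linarith
  then show ?thesis
  proof cases
    case 1
    then show ?thesis unfolding gsum_def using split_top[of c m] by simp
  next
    case 4
    then show ?thesis unfolding gsum_def using split_bottom[of m "c - 1"] by simp
  qed (simp_all add: gsum_def)
qed

lemma gsum_telescope:
  assumes "\<And>m. f m - f (m - 1) = h m"
  shows "gsum c m h = f m - f (c - 1)"
proof (induction m rule: int_induct[where k = "c - 1"])
  case base
  then show ?case by (simp add: gsum_def)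
next
  case (step1 i)
  then show ?case using gsum_diff[of c "i + 1" h] assms[of "i + 1"] by (simp add: algebra_simps)
next
  case (step2 i)
  then show ?case using gsum_diff[of c i h] assms[of i] by (simp add: algebra_simps)
qed

lemma nested_telescoping:
  fixes A :: "nat \<Rightarrow> int \<Rightarrow> complex"
  assumes A_diff: "\<And>n m. A (Suc n) m - A (Suc n) (m - 1) = A n m"
  shows "nested n c (A 0) m
    = A n m - (\<Sum>j<n. A (n - j) (c - 1) * (of_int (m + int j - c) gchoose j))"
proof -
  define R where "R n m = A n m - (\<Sum>j<n. A (n - j) (c - 1) * (of_int (m + int j - c) gchoose j))"
    for n m
  have R_Suc: "R (Suc n) m = A (Suc n) m - A (Suc n) (c - 1)
      - (\<Sum>j<n. A (n - j) (c - 1) * (of_int (m + int j - c) + 1 gchoose Suc j))" for n m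
    unfolding R_def sum.lessThan_Suc_shift by (simp add: algebra_simps)
  have binomial_diff: "(of_int (m + int j - c) + 1 gchoose Suc j)
      - (of_int (m - 1 + int j - c) + 1 gchoose Suc j) = (of_int (m + int j - c) gchoose j :: complex)"
    for m j
  proof -
    have shift: "(of_int (m - 1 + int j - c) + 1 :: complex) = of_int (m + int j - c)" by simp
    show ?thesis unfolding shift gbinomial_Suc_Suc by simp
  qed
  have R_diff: "R (Suc n) m - R (Suc n) (m - 1) = R n m" for n m
  proof -
    have "R (Suc n) m - R (Suc n) (m - 1) = (A (Suc n) m - A (Suc n) (m - 1))
        - (\<Sum>j<n. A (n - j) (c - 1) * (of_int (m + int j - c) gchoose j))"
      unfolding R_Suc binomial_diff[symmetric] by (simp add: algebra_simps sum_subtractf)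
    then show ?thesis unfolding A_diff R_def .
  qed
  have R_boundary: "R (Suc n) (c - 1) = 0" for n
  proof -
    have "(of_int (c - 1 - c + int j) + 1 gchoose Suc j :: complex) = 0" for j
      by (simp flip: binomial_gbinomial)
    then show ?thesis unfolding R_Suc by simp
  qed
  have "nested n c (A 0) m = R n m"
  proof (induction n arbitrary: m)
    case 0
    then show ?case by (simp add: R_def)
  next
    case (Suc n)
    have "nested n c (A 0) = R n"
      using Suc.IH ..
    then have "nested (Suc n) c (A 0) m = gsum c m (R n)"
      by simp
    also have "\<dots> = R (Suc n) m"
      using gsum_telescope[of "R (Suc n)" "R n", OF R_diff] R_boundary by simp
    finally show ?case .
  qed
  then show ?thesis unfolding R_def .
qed

lemma horadam_weighted_step:
  fixes s :: int
  assumes "horadam_recurrence p q f" "q \<noteq> 0" "U p q d \<noteq> 0" "U p q r \<noteq> 0" "U p q (r + d) \<noteq> 0"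
  defines "A \<equiv> \<lambda>k m. (-1) ^ k / q powi (d * int k) * (U p q d / U p q r) ^ k
      * (U p q d / U p q (r + d)) powi m * f ((r + d) * int k + r * m + s)"
  shows "A (Suc k) m - A (Suc k) (m - 1) = A k m"
proof -
  define x where "x = U p q d / U p q (r + d)"
  define y where "y = - U p q d / (q powi d * U p q r)"
  define z where "z = (-1) ^ k / q powi (d * int k) * (U p q d / U p q r) ^ k"
  define u where "u = (r + d) * int k + r * m + s"
  have x_pow: "x powi m = x powi (m - 1) * x"
    using assms(3,5) power_int_add_1[of x "m - 1"] by (simp add: x_def)
  have z_Suc: "(-1) ^ Suc k / q powi (d * int (Suc k)) * (U p q d / U p q r) ^ Suc k = z * y"
    using assms(2) by (simp add: z_def y_def power_int_add algebra_simps)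
  have "U p q (r + d) * f (u + d) - U p q d * f (u + r + d) = q powi d * U p q r * f u"
    by (rule horadam_vajda[OF assms(1,2)])
  then have vajda: "y * (x * f (u + r + d) - f (u + d)) = x * f u"
    using assms(2-5) by (simp add: x_def y_def field_simps)
  have indices: "(r + d) * int (Suc k) + r * m + s = u + r + d"
    "(r + d) * int (Suc k) + r * (m - 1) + s = u + d"
    by (simp_all add: u_def algebra_simps)
  have "A (Suc k) m - A (Suc k) (m - 1) = z * x powi (m - 1) * (y * (x * f (u + r + d) - f (u + d)))"
    unfolding A_def z_Suc x_def[symmetric] x_pow indices by (simp add: algebra_simps)
  also have "\<dots> = A k m"
    unfolding vajda A_def z_def[symmetric] x_def[symmetric] u_def[symmetric] x_pow by (simp add: algebra_simps)
  finally show ?thesis .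
qed

theorem theorem5:
  fixes a b p q :: complex and r s c d an :: int and n :: nat
  assumes "p \<noteq> 0" and "q \<noteq> 0"
    and "r \<noteq> 0" and "r + d \<noteq> 0" and "n > 0"
    and "U p q d \<noteq> 0" and "U p q r \<noteq> 0" and "U p q (r + d) \<noteq> 0"
  shows "nested n c (\<lambda>a0. (U p q d / U p q (r + d)) powi a0 * W a b p q (r * a0 + s)) an
    = (-1) ^ n * U p q d powi (int n + an)
        / (q powi (d * int n) * U p q r ^ n * U p q (r + d) powi an)
        * W a b p q ((r + d) * int n + r * an + s)
      - (U p q d / U p q (r + d)) powi (c - 1)
        * (\<Sum>j = 0..n - 1. (-1) ^ (n - j) / q powi (d * int (n - j))
            * (U p q d / U p q r) ^ (n - j)
            * W a b p q (r * (int (n - j) + c - 1) + d * int (n - j) + s)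
            * (of_int (an + int j - c) gchoose j))"
proof -
  define A where "A k m = (-1) ^ k / q powi (d * int k) * (U p q d / U p q r) ^ k
      * (U p q d / U p q (r + d)) powi m * W a b p q ((r + d) * int k + r * m + s)" for k m
  have step: "A (Suc k) m - A (Suc k) (m - 1) = A k m" for k m
    unfolding A_def
    by (rule horadam_weighted_step[OF horadam_recurrence_W[OF assms(2)] assms(2,6-8)])
  have "(\<lambda>a0. (U p q d / U p q (r + d)) powi a0 * W a b p q (r * a0 + s)) = A 0"
    by (rule ext) (simp add: A_def)
  then have "nested n c (\<lambda>a0. (U p q d / U p q (r + d)) powi a0 * W a b p q (r * a0 + s)) an
      = A n an - (\<Sum>j<n. A (n - j) (c - 1) * (of_int (an + int j - c) gchoose j))"
    using nested_telescoping[of A, OF step] by simp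
  also have "A n an = (-1) ^ n * U p q d powi (int n + an)
      / (q powi (d * int n) * U p q r ^ n * U p q (r + d) powi an) * W a b p q ((r + d) * int n + r * an + s)"
    using assms(6) by (simp add: A_def power_int_add power_int_divide_distrib power_divide)
  also have "{..<n} = {0..n - 1}"
    using assms(5) by auto
  also have "(\<Sum>j\<in>{0..n - 1}. A (n - j) (c - 1) * (of_int (an + int j - c) gchoose j))
      = (U p q d / U p q (r + d)) powi (c - 1) * (\<Sum>j = 0..n - 1. (-1) ^ (n - j) / q powi (d * int (n - j))
            * (U p q d / U p q r) ^ (n - j)
            * W a b p q (r * (int (n - j) + c - 1) + d * int (n - j) + s)
            * (of_int (an + int j - c) gchoose j))"
    unfolding sum_distrib_left A_def by (intro sum.cong) (simp_all add: algebra_simps)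
  finally show ?thesis .
qed

end
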